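(* Let $m\ge 0$ be an integer and let $n,N$ be complex numbers such that $N\notin\{0,-1,\dots,-m\}$ and neither $n-m$ nor $1-N-m+n$ belongs to $\{0,-1,\dots,-(m-1)\}$. Then $$(-1)^m\frac{(m+1)\,(n-m)_m\,(N-n)_m}{m!\,(N)_{m+1}}\;{}_3F_2\!\left(\begin{matrix}-m,\ n+1,\ 1-N+n\\ n-m,\ 1-N-m+n\end{matrix};1\right)=\frac{(m+1)^2}{N}\;{}_3F_2\!\left(\begin{matrix}-m,\ n+1,\ m+2\\ 2,\ N+1\end{matrix};1\right).$$
   Context: $(a)_k=a(a+1)\cdots(a+k-1)$ is the Pochhammer symbol, $(a)_0=1$. ${}_3F_2\!\left(\begin{matrix}-m,a_2,a_3\\ b_1,b_2\end{matrix};1\right)=\sum_{k=0}^{m}\frac{(-m)_k(a_2)_k(a_3)_k}{(b_1)_k(b_2)_k\,k!}$ (terminating sum). *)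

theory Defs
  imports Complex_Main
begin

definition hyp3F2_term :: "nat \<Rightarrow> complex \<Rightarrow> complex \<Rightarrow> complex \<Rightarrow> complex \<Rightarrow> complex" where
  "hyp3F2_term m a2 a3 b1 b2 =
     (\<Sum>k=0..m. pochhammer (- of_nat m) k * pochhammer a2 k * pochhammer a3 k /
                 (pochhammer b1 k * pochhammer b2 k * of_nat (fact k)))"

end

theory Submission
  imports Defs "HOL-Computational_Algebra.Formal_Power_Series"
begin

(* The right-hand series is turned into the left-hand one by applying twice the classical
   transformation of terminating series
     3F2(-m, a, b; d, e; 1) = (d-a)_m / (d)_m * 3F2(-m, a, e-b; e, 1+a-d-m; 1).
   That transformation is Chu-Vandermonde used twice: expand (b)_k / (e)_k as a terminating 2F1
   in a new index j, exchange the two sums, and sum the inner series over k by Chu-Vandermonde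
   again. The prefactors then match by (2)_m = (m+1)!, (N)_(m+1) = N (N+1)_m and
   (n-m)_m = (-1)^m (1-n)_m. *)

lemma Vandermonde_pochhammer_upto:
  fixes b e :: "'a::field_char_0"
  assumes e: "pochhammer e m \<noteq> 0" and "k \<le> m"
  shows "pochhammer b k / pochhammer e k =
     (\<Sum>j=0..m. pochhammer (e - b) j * pochhammer (- of_nat k) j / (fact j * pochhammer e j))"
proof -
  have "\<forall>i\<in>{0..<k}. e \<noteq> - of_nat i"
    using e \<open>k \<le> m\<close> by (auto simp: pochhammer_eq_0_iff)
  then have "pochhammer b k / pochhammer e k =
      (\<Sum>j=0..k. pochhammer (e - b) j * pochhammer (- of_nat k) j / (fact j * pochhammer e j))"
    using Vandermonde_pochhammer[of k e "e - b"] by simp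
  also have "\<dots> = (\<Sum>j=0..m. pochhammer (e - b) j * pochhammer (- of_nat k) j / (fact j * pochhammer e j))"
    by (rule sum.mono_neutral_left) (use \<open>k \<le> m\<close> in \<open>auto simp: pochhammer_of_nat_eq_0_lemma\<close>)
  finally show ?thesis .
qed

lemma pochhammer_shifted_term:
  fixes a d :: "'a::field_char_0"
  assumes d: "pochhammer d (j + l) \<noteq> 0" and "j \<le> m"
  shows "pochhammer (- of_nat m) (j + l) * pochhammer a (j + l) / (pochhammer d (j + l) * fact (j + l))
           * pochhammer (- of_nat (j + l)) j
       = (-1)^j * pochhammer (- of_nat m) j * pochhammer a j / pochhammer d j
           * (pochhammer (a + of_nat j) l * pochhammer (- of_nat (m - j)) l
              / (fact l * pochhammer (d + of_nat j) l))"
proof -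
  have split_m: "pochhammer (- of_nat m :: 'a) (j + l) = pochhammer (- of_nat m) j * pochhammer (- of_nat (m - j)) l"
    using \<open>j \<le> m\<close> by (simp add: pochhammer_product' of_nat_diff)
  have split_a: "pochhammer a (j + l) = pochhammer a j * pochhammer (a + of_nat j) l"
    and split_d: "pochhammer d (j + l) = pochhammer d j * pochhammer (d + of_nat j) l"
    by (simp_all add: pochhammer_product')
  have split_fact: "(fact (j + l) :: 'a) = fact l * pochhammer (of_nat l + 1) j"
    using pochhammer_product'[of "1::'a" l j] by (simp add: pochhammer_fact add.commute)
  have reflect: "pochhammer (- of_nat (j + l) :: 'a) j = (-1)^j * pochhammer (of_nat l + 1) j"
    by (subst pochhammer_minus) (simp add: algebra_simps)
  have "pochhammer (of_nat l + 1 :: 'a) j \<noteq> 0"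
    using split_fact fact_nonzero[of "j + l"] by force
  then show ?thesis
    using d unfolding split_m split_a split_d split_fact reflect by (simp add: field_simps)
qed

(* (-k)_j vanishes for k < j; after the shift k = j + l what remains is a Chu-Vandermonde sum. *)
lemma sum_pochhammer_falling_moment:
  fixes a d :: "'a::field_char_0"
  assumes d: "pochhammer d m \<noteq> 0" and "j \<le> m"
  shows "(\<Sum>k=0..m. pochhammer (- of_nat m) k * pochhammer a k / (pochhammer d k * fact k)
                      * pochhammer (- of_nat k) j)
       = (-1)^j * pochhammer (- of_nat m) j * pochhammer a j * pochhammer (d - a) (m - j)
           / pochhammer d m"
proof -
  let ?t = "\<lambda>k. pochhammer (- of_nat m) k * pochhammer a k / (pochhammer d k * fact k)
                  * pochhammer (- of_nat k :: 'a) j"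
  let ?C = "(-1)^j * pochhammer (- of_nat m) j * pochhammer a j / pochhammer d j"
  let ?s = "\<lambda>l. pochhammer (a + of_nat j) l * pochhammer (- of_nat (m - j)) l
                  / (fact l * pochhammer (d + of_nat j) l)"
  have split_d: "pochhammer d m = pochhammer d j * pochhammer (d + of_nat j) (m - j)"
    using \<open>j \<le> m\<close> by (simp add: pochhammer_product)
  have "(\<Sum>k=0..m. ?t k) = (\<Sum>k=j..m. ?t k)"
    by (rule sum.mono_neutral_right) (auto simp: pochhammer_of_nat_eq_0_lemma)
  also have "\<dots> = (\<Sum>l=0..m-j. ?t (j + l))"
    by (subst sum.atLeastAtMost_shift_0[OF \<open>j \<le> m\<close>]) simp
  also have "\<dots> = (\<Sum>l=0..m-j. ?C * ?s l)"
  proof (rule sum.cong[OF refl])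
    fix l assume "l \<in> {0..m-j}"
    then have "pochhammer d (j + l) \<noteq> 0"
      using d pochhammer_neq_0_mono[of d m "j + l"] \<open>j \<le> m\<close> by simp
    then show "?t (j + l) = ?C * ?s l"
      using pochhammer_shifted_term[OF _ \<open>j \<le> m\<close>] by simp
  qed
  also have "\<dots> = ?C * (\<Sum>l=0..m-j. ?s l)"
    by (simp add: sum_distrib_left)
  also have "(\<Sum>l=0..m-j. ?s l) = pochhammer (d - a) (m - j) / pochhammer (d + of_nat j) (m - j)"
  proof -
    have "pochhammer (d + of_nat j) (m - j) \<noteq> 0"
      using d split_d by simp
    then have "\<forall>i\<in>{0..<m-j}. d + of_nat j \<noteq> - of_nat i"
      by (auto simp: pochhammer_eq_0_iff)
    from Vandermonde_pochhammer[OF this, of "a + of_nat j"] show ?thesis by simp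
  qed
  finally show ?thesis
    using d unfolding split_d by (simp add: field_simps)
qed

lemma pochhammer_split_reflect:
  fixes c :: "'a::field_char_0"
  assumes "j \<le> m" and nz: "pochhammer (1 - c - of_nat m) j \<noteq> 0"
  shows "(-1)^j * pochhammer c (m - j) = pochhammer c m / pochhammer (1 - c - of_nat m) j"
proof -
  have split: "pochhammer c m = pochhammer c (m - j) * pochhammer (c + of_nat (m - j)) j"
    using pochhammer_product'[of c "m - j" j] \<open>j \<le> m\<close> by simp
  have reflect: "pochhammer (1 - c - of_nat m) j = (-1)^j * pochhammer (c + of_nat (m - j)) j"
    using pochhammer_minus'[of "- c - of_nat m + of_nat j" j] \<open>j \<le> m\<close>
    by (simp add: of_nat_diff algebra_simps)
  show ?thesis
    using nz unfolding split reflect by (simp add: field_simps)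
qed

lemma hyp3F2_term_transform:
  assumes d: "pochhammer d m \<noteq> 0" and e: "pochhammer e m \<noteq> 0"
    and f: "pochhammer (1 + a - d - of_nat m) m \<noteq> 0"
  shows "hyp3F2_term m a b d e
       = pochhammer (d - a) m / pochhammer d m * hyp3F2_term m a (e - b) e (1 + a - d - of_nat m)"
proof -
  define A where "A k = pochhammer (- of_nat m) k * pochhammer a k / (pochhammer d k * fact k)" for k
  define B where "B j = pochhammer (e - b) j / (fact j * pochhammer e j)" for j
  have reflect: "(-1)^j * pochhammer (d - a) (m - j) = pochhammer (d - a) m / pochhammer (1 + a - d - of_nat m) j"
    if "j \<le> m" for j
  proof -
    have shift: "1 + a - d - of_nat m = 1 - (d - a) - of_nat m"
      by simp
    have "pochhammer (1 - (d - a) - of_nat m) j \<noteq> 0"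
      using f pochhammer_neq_0_mono that unfolding shift by blast
    then show ?thesis
      unfolding shift by (rule pochhammer_split_reflect[OF that])
  qed
  have "hyp3F2_term m a b d e = (\<Sum>k=0..m. A k * (pochhammer b k / pochhammer e k))"
    unfolding hyp3F2_term_def A_def by (rule sum.cong[OF refl]) (simp add: field_simps)
  also have "\<dots> = (\<Sum>k=0..m. \<Sum>j=0..m. B j * (A k * pochhammer (- of_nat k) j))"
    by (rule sum.cong[OF refl])
      (simp add: Vandermonde_pochhammer_upto[OF e] B_def sum_distrib_left field_simps)
  also have "\<dots> = (\<Sum>j=0..m. B j * (\<Sum>k=0..m. A k * pochhammer (- of_nat k) j))"
    by (subst sum.swap) (simp add: sum_distrib_left)
  also have "\<dots> = (\<Sum>j=0..m. B j * ((-1)^j * pochhammer (- of_nat m) j * pochhammer a j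
                                    * pochhammer (d - a) (m - j) / pochhammer d m))"
    by (rule sum.cong[OF refl]) (use sum_pochhammer_falling_moment[OF d] in \<open>simp add: A_def\<close>)
  also have "\<dots> = (\<Sum>j=0..m. B j * (pochhammer (- of_nat m) j * pochhammer a j / pochhammer d m
                                    * ((-1)^j * pochhammer (d - a) (m - j))))"
    by (rule sum.cong[OF refl]) (simp add: field_simps)
  also have "\<dots> = (\<Sum>j=0..m. B j * (pochhammer (- of_nat m) j * pochhammer a j / pochhammer d m
                                    * (pochhammer (d - a) m / pochhammer (1 + a - d - of_nat m) j)))"
    by (rule sum.cong[OF refl]) (use reflect in simp)
  also have "\<dots> = pochhammer (d - a) m / pochhammer d m * hyp3F2_term m a (e - b) e (1 + a - d - of_nat m)"
    unfolding hyp3F2_term_def B_def sum_distrib_left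
    by (rule sum.cong[OF refl]) (simp add: field_simps)
  finally show ?thesis .
qed

lemma hyp3F2_term_transform_twice:
  assumes d: "pochhammer d m \<noteq> 0" and e: "pochhammer e m \<noteq> 0"
    and f: "pochhammer (1 + a - d - of_nat m) m \<noteq> 0"
    and g: "pochhammer (1 + a - e - of_nat m) m \<noteq> 0"
  shows "hyp3F2_term m a b d e
       = pochhammer (d - a) m / pochhammer d m * (pochhammer (e - a) m / pochhammer e m
         * hyp3F2_term m a (1 + a + b - d - e - of_nat m) (1 + a - d - of_nat m) (1 + a - e - of_nat m))"
proof -
  have "hyp3F2_term m a (e - b) e (1 + a - d - of_nat m)
      = pochhammer (e - a) m / pochhammer e m
        * hyp3F2_term m a (1 + a - d - of_nat m - (e - b)) (1 + a - d - of_nat m) (1 + a - e - of_nat m)"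
    by (rule hyp3F2_term_transform[OF e f g])
  then show ?thesis
    using hyp3F2_term_transform[OF d e f, of b] by (simp add: algebra_simps)
qed

lemma pochhammer_two: "pochhammer 2 m = (fact (Suc m) :: 'a::{comm_semiring_1,semiring_char_0})"
  by (simp add: pochhammer_fact pochhammer_rec)

theorem mainTheorem2:
  fixes m :: nat and n N :: complex
  assumes "\<forall>j\<in>{0..m}. N \<noteq> - of_nat j"
    and "\<forall>j\<in>{0..<m}. n - of_nat m \<noteq> - of_nat j"
    and "\<forall>j\<in>{0..<m}. 1 - N - of_nat m + n \<noteq> - of_nat j"
  shows "(-1) ^ m * (of_nat (m + 1) * pochhammer (n - of_nat m) m * pochhammer (N - n) m
            / (of_nat (fact m) * pochhammer N (m + 1)))
          * hyp3F2_term m (n + 1) (1 - N + n) (n - of_nat m) (1 - N - of_nat m + n)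
       = (of_nat (m + 1))^2 / N * hyp3F2_term m (n + 1) (of_nat m + 2) 2 (N + 1)"
proof -
  have "pochhammer N (m + 1) \<noteq> 0"
    using assms(1) by (auto simp: pochhammer_eq_0_iff)
  then have N: "N \<noteq> 0" and poch_N1: "pochhammer (N + 1) m \<noteq> 0"
    by (simp_all add: pochhammer_rec)
  have poch_n: "pochhammer (n - of_nat m) m \<noteq> 0"
    using assms(2) by (auto simp: pochhammer_eq_0_iff)
  have poch_Nn: "pochhammer (1 - N - of_nat m + n) m \<noteq> 0"
    using assms(3) by (auto simp: pochhammer_eq_0_iff)
  have rhs: "hyp3F2_term m (n + 1) (of_nat m + 2) 2 (N + 1)
      = pochhammer (1 - n) m / fact (m + 1) * (pochhammer (N - n) m / pochhammer (N + 1) m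
        * hyp3F2_term m (n + 1) (1 - N + n) (n - of_nat m) (1 - N - of_nat m + n))"
    using hyp3F2_term_transform_twice[of 2 m "N + 1" "n + 1" "of_nat m + 2"] poch_N1 poch_n poch_Nn
    unfolding pochhammer_two by (simp add: algebra_simps del: fact_Suc)
  have reflect: "pochhammer (n - of_nat m) m = (-1)^m * pochhammer (1 - n) m"
    using pochhammer_minus'[of "n - 1" m] by (simp add: algebra_simps)
  have prefactors: "(-1)^m * (c * ((-1)^m * P) * Q / (f * (N * R))) * F
      = c^2 / N * (P / (c * f) * (Q / R * F))"
    if "c \<noteq> 0" "f \<noteq> 0" "R \<noteq> 0" for c f P Q R F :: complex
    using that N by (simp add: field_simps power2_eq_square minus_one_mult_self)
  show ?thesis
    unfolding rhs reflect of_nat_fact fact_Suc[of m, unfolded Suc_eq_plus1]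
      pochhammer_rec[of N m, unfolded Suc_eq_plus1]
    by (rule prefactors[OF of_nat_neq_0[of m, unfolded Suc_eq_plus1] fact_nonzero poch_N1])
qed

end
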